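(* Let $A,B,C$ be smooth functions on $[0,1]$ and consider the Abel equation $$\frac{dx}{dt}=A(t)x^3+B(t)x^2+C(t)x,\qquad t\in[0,1].$$ Assume that there exist real numbers $a,b,c$ such that $aA(t)+bB(t)$ is not identically zero and does not change sign on $[0,1]$, and such that $$(bC(t)-cA(t))^2+(aA(t)+bB(t))(cB(t)+aC(t))<0\quad\text{for all } t\in[0,1].$$ Then the equation has at most four non-zero periodic orbits.
   Context: A periodic orbit is a solution $x(t)$ defined on all of $[0,1]$ with $x(0)=x(1)$; $x\equiv0$ is always one, and non-zero periodic orbits are the others. *)

theory Defs
  imports "HOL-Analysis.Analysis"
begin

definition smooth_on_unit :: "(real \<Rightarrow> real) \<Rightarrow> bool" where
  "smooth_on_unit f \<longleftrightarrow> (\<exists>D :: nat \<Rightarrow> real \<Rightarrow> real. D 0 = f \<and>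
     (\<forall>n. \<forall>t\<in>{0..1}. (D n has_real_derivative D (Suc n) t) (at t within {0..1})))"

definition abel_solution :: "(real \<Rightarrow> real) \<Rightarrow> (real \<Rightarrow> real) \<Rightarrow> (real \<Rightarrow> real) \<Rightarrow> (real \<Rightarrow> real) \<Rightarrow> bool" where
  "abel_solution A B C x \<longleftrightarrow>
     (\<forall>t\<in>{0..1}. (x has_real_derivative (A t * (x t)^3 + B t * (x t)^2 + C t * x t)) (at t within {0..1}))"

text \<open>Non-zero periodic orbits, each represented canonically by its restriction to [0,1]
  (extended by 0 outside [0,1]), so that distinct elements are distinct orbits.\<close>
definition nonzero_periodic_orbits :: "(real \<Rightarrow> real) \<Rightarrow> (real \<Rightarrow> real) \<Rightarrow> (real \<Rightarrow> real) \<Rightarrow> (real \<Rightarrow> real) set" where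
  "nonzero_periodic_orbits A B C =
     {x. (\<forall>t. t \<notin> {0..1} \<longrightarrow> x t = 0) \<and> abel_solution A B C x \<and> x 0 = x 1 \<and>
         (\<exists>t\<in>{0..1}. x t \<noteq> 0)}"

end

theory Submission
  imports Defs "HOL-Computational_Algebra.Polynomial"
begin

text \<open>
  Let \<sigma> be the sign of aA + bB. The discriminant condition says exactly that
  Q t y = (aA + bB) y^2 + 2 (bC - cA) y - (cB + aC) satisfies \<sigma> Q t y > 0. Put
  G y = b y^2 - a y + c. At a root \<rho> of G one has (A \<rho>^2 + B \<rho> + C)(2 b \<rho> - a) = Q t \<rho>,
  so solutions cross the level x = \<rho> always in the same direction and a periodic orbit
  cannot meet it; by uniqueness it cannot meet the invariant level x = 0 either. These at
  most three levels cut the phase line into at most four strips, and distinct periodic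
  orbits are strictly ordered. Inside a strip the coordinate \<psi> with \<psi>' y = 1 / (y G y)
  turns the equation into \<psi>(x)' = R t x with R t y = (A y^2 + B y + C) / G y, and
  d R / d y = - Q / G^2 has the constant sign -\<sigma>. For periodic orbits u < v in the same
  strip, \<psi>(v) - \<psi>(u) would therefore be strictly monotone in t, contradicting periodicity.
\<close>

section \<open>One-variable calculus\<close>

lemma mvt_real_derivative_within:
  fixes f f' :: "real \<Rightarrow> real"
  assumes "a < b" "{a..b} \<subseteq> S"
    and deriv: "\<And>t. t \<in> {a..b} \<Longrightarrow> (f has_real_derivative f' t) (at t within S)"
  shows "\<exists>\<xi>\<in>{a<..<b}. f b - f a = f' \<xi> * (b - a)"
proof -
  have "(f has_derivative (\<lambda>h. f' t * h)) (at t within {a..b})" if "a \<le> t" "t \<le> b" for t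
    using has_field_derivative_subset[OF deriv assms(2)] that
    by (simp add: has_field_derivative_def)
  with mvt_simple[OF assms(1), of f "\<lambda>t h. f' t * h"] show ?thesis
    by auto
qed

lemma DERIV_nonpos_within_imp_decreasing:
  fixes f f' :: "real \<Rightarrow> real"
  assumes "a \<le> b" "{a..b} \<subseteq> S"
    and deriv: "\<And>t. t \<in> {a..b} \<Longrightarrow> (f has_real_derivative f' t) (at t within S)"
    and nonpos: "\<And>t. t \<in> {a<..<b} \<Longrightarrow> f' t \<le> 0"
  shows "f b \<le> f a"
proof (cases "a = b")
  case False
  with mvt_real_derivative_within[OF _ assms(2) deriv] \<open>a \<le> b\<close>
  obtain \<xi> where "\<xi> \<in> {a<..<b}" "f b - f a = f' \<xi> * (b - a)"
    by auto
  moreover have "f' \<xi> * (b - a) \<le> 0"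
    using nonpos[OF \<open>\<xi> \<in> {a<..<b}\<close>] \<open>a \<le> b\<close> by (simp add: mult_nonpos_nonneg)
  ultimately show ?thesis
    by simp
qed simp

lemma vanishing_if_abs_deriv_le_mult:
  fixes w w' :: "real \<Rightarrow> real"
  assumes deriv: "\<And>t. t \<in> {a..b} \<Longrightarrow> (w has_real_derivative w' t) (at t within {a..b})"
    and bound: "\<And>t. t \<in> {a..b} \<Longrightarrow> \<bar>w' t\<bar> \<le> L * w t"
    and nonneg: "\<And>t. t \<in> {a..b} \<Longrightarrow> 0 \<le> w t"
    and t0: "t0 \<in> {a..b}" "w t0 = 0" and t: "t \<in> {a..b}"
  shows "w t = 0"
proof -
  have "w t * exp (- (L * t)) \<le> 0" if "t0 \<le> t"
  proof -
    have "(\<lambda>s. w s * exp (- (L * s))) t \<le> (\<lambda>s. w s * exp (- (L * s))) t0"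
    proof (rule DERIV_nonpos_within_imp_decreasing[OF \<open>t0 \<le> t\<close>])
      show "{t0..t} \<subseteq> {a..b}"
        using t0 t by auto
      show "((\<lambda>s. w s * exp (- (L * s))) has_real_derivative
          (w' s - L * w s) * exp (- (L * s))) (at s within {a..b})" if "s \<in> {t0..t}" for s
        using deriv[of s] that t0 t
        by (auto intro!: derivative_eq_intros simp: algebra_simps)
      show "(w' s - L * w s) * exp (- (L * s)) \<le> 0" if "s \<in> {t0<..<t}" for s
        using bound[of s] that t0 t by (simp add: mult_nonpos_nonneg)
    qed
    with t0 show ?thesis
      by simp
  qed
  moreover have "w t * exp (L * t) \<le> 0" if "t \<le> t0"
  proof -
    have "(\<lambda>s. - w s * exp (L * s)) t0 \<le> (\<lambda>s. - w s * exp (L * s)) t"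
    proof (rule DERIV_nonpos_within_imp_decreasing[OF \<open>t \<le> t0\<close>])
      show "{t..t0} \<subseteq> {a..b}"
        using t0 t by auto
      show "((\<lambda>s. - w s * exp (L * s)) has_real_derivative
          - (w' s + L * w s) * exp (L * s)) (at s within {a..b})" if "s \<in> {t..t0}" for s
        using deriv[of s] that t0 t
        by (auto intro!: derivative_eq_intros simp: algebra_simps)
      show "- (w' s + L * w s) * exp (L * s) \<le> 0" if "s \<in> {t<..<t0}" for s
        using bound[of s] that t0 t by (simp add: mult_nonpos_nonneg)
    qed
    with t0 show ?thesis
      by simp
  qed
  ultimately have "w t \<le> 0"
    by (cases "t0 \<le> t") (auto simp: mult_le_0_iff)
  with nonneg[OF t] show ?thesis
    by simp
qed

lemma pos_if_upward_zero_crossings: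
  fixes f f' :: "real \<Rightarrow> real"
  assumes deriv: "\<And>t. t \<in> {a..b} \<Longrightarrow> (f has_real_derivative f' t) (at t within {a..b})"
    and crossing: "\<And>t. t \<in> {a..b} \<Longrightarrow> f t = 0 \<Longrightarrow> 0 < f' t"
    and "0 \<le> f a" "a < t" "t \<le> b"
  shows "0 < f t"
proof (rule ccontr)
  assume "\<not> 0 < f t"
  have cont: "continuous_on {a..b} f"
    using DERIV_continuous_on[OF deriv] .
  obtain s where s: "a \<le> s" "s < t" "0 < f s"
  proof (cases "f a = 0")
    case True
    have "a \<in> {a..b}"
      using \<open>a < t\<close> \<open>t \<le> b\<close> by simp
    from has_real_derivative_pos_inc_right[OF deriv[OF this] crossing[OF this True]] obtain d where
      "0 < d" and inc: "\<forall>h>0. a + h \<in> {a..b} \<longrightarrow> h < d \<longrightarrow> f a < f (a + h)"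
      by blast
    define h where "h = min d (t - a) / 2"
    have "0 < h" "h < d" "a + h < t"
      using \<open>0 < d\<close> \<open>a < t\<close> unfolding h_def by (auto simp: min_def field_simps)
    with inc True \<open>t \<le> b\<close> show ?thesis
      by (intro that[of "a + h"]) auto
  next
    case False
    with \<open>0 \<le> f a\<close> \<open>a < t\<close> show ?thesis
      by (intro that[of a]) auto
  qed
  text \<open>At the first point m after s where f is not positive, f vanishes; then f' m > 0
    makes f negative just before m.\<close>
  define K where "K = {s..t} \<inter> f -` {..0}"
  have "closed K"
    unfolding K_def using \<open>a \<le> s\<close> \<open>t \<le> b\<close>
    by (intro continuous_closed_preimage continuous_on_subset[OF cont]) auto
  moreover have "t \<in> K"
    unfolding K_def using \<open>s < t\<close> \<open>\<not> 0 < f t\<close> by auto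
  moreover have "bdd_below K"
    unfolding K_def by (rule bdd_belowI[of _ s]) auto
  ultimately have "Inf K \<in> K"
    using closed_contains_Inf by blast
  define m where "m = Inf K"
  have first: "m \<le> \<tau>" if "\<tau> \<in> K" for \<tau>
    unfolding m_def using \<open>bdd_below K\<close> that by (simp add: cInf_lower)
  have m: "s < m" "m \<le> t" "f m \<le> 0"
    using \<open>Inf K \<in> K\<close> \<open>0 < f s\<close> unfolding K_def m_def by (auto simp: le_less)
  have "m \<in> {a..b}"
    using m \<open>a \<le> s\<close> \<open>t \<le> b\<close> by auto
  have "continuous_on {s..m} f"
    using continuous_on_subset[OF cont] \<open>a \<le> s\<close> m \<open>t \<le> b\<close> by auto
  then obtain \<tau> where \<tau>: "s \<le> \<tau>" "\<tau> \<le> m" "f \<tau> = 0"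
    using IVT2'[of f m 0 s] m \<open>0 < f s\<close> by auto
  then have "f m = 0"
    using first[of \<tau>] m unfolding K_def by auto
  from has_real_derivative_pos_inc_left[OF deriv[OF \<open>m \<in> {a..b}\<close>] crossing[OF \<open>m \<in> {a..b}\<close> this]]
  obtain d where "0 < d" and dec: "\<forall>h>0. m - h \<in> {a..b} \<longrightarrow> h < d \<longrightarrow> f (m - h) < f m"
    by blast
  define h where "h = min d (m - s) / 2"
  have "0 < h" "h < d" "s < m - h"
    using \<open>0 < d\<close> m unfolding h_def by (auto simp: min_def field_simps)
  with dec \<open>f m = 0\<close> \<open>a \<le> s\<close> m \<open>t \<le> b\<close> have "m - h \<in> K"
    unfolding K_def by auto
  with first[of "m - h"] \<open>0 < h\<close> show False
    by simp
qed

lemma nonzero_if_upward_zero_crossings_periodic: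
  fixes f f' :: "real \<Rightarrow> real"
  assumes deriv: "\<And>t. t \<in> {a..b} \<Longrightarrow> (f has_real_derivative f' t) (at t within {a..b})"
    and crossing: "\<And>t. t \<in> {a..b} \<Longrightarrow> f t = 0 \<Longrightarrow> 0 < f' t"
    and "a < b" "f a = f b" and t: "t \<in> {a..b}"
  shows "f t \<noteq> 0"
proof (cases "0 \<le> f a")
  case True
  have pos: "0 < f s" if "a < s" "s \<le> b" for s
    using deriv crossing True that by (rule pos_if_upward_zero_crossings)
  have "0 < f b"
    using pos[of b] \<open>a < b\<close> by simp
  with pos[of t] \<open>f a = f b\<close> t show ?thesis
    by (cases "t = a") auto
next
  case False
  text \<open>Reversing both time and sign keeps zero crossings upward.\<close>
  define g where "g t = - f (a + b - t)" for t
  have reflect: "a + b - t \<in> {a..b}" if "t \<in> {a..b}" for t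
    using that by auto
  have deriv_g: "(g has_real_derivative f' (a + b - t)) (at t within {a..b})"
    if "t \<in> {a..b}" for t
  proof -
    have "(\<lambda>t. a + b - t) ` {a..b} \<subseteq> {a..b}"
      using reflect by blast
    with deriv[OF reflect[OF that]]
    have "(f has_real_derivative f' (a + b - t)) (at (a + b - t) within (\<lambda>t. a + b - t) ` {a..b})"
      by (rule has_field_derivative_subset)
    moreover have "((\<lambda>t. a + b - t) has_real_derivative -1) (at t within {a..b})"
      by (auto intro!: derivative_eq_intros)
    ultimately have "(f \<circ> (\<lambda>t. a + b - t) has_real_derivative f' (a + b - t) * -1) (at t within {a..b})"
      by (rule DERIV_image_chain)
    then show ?thesis
      unfolding g_def o_def by (auto intro!: derivative_eq_intros)
  qed
  have crossing_g: "0 < f' (a + b - t)" if "t \<in> {a..b}" "g t = 0" for t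
    using crossing[OF reflect[OF that(1)]] that(2) unfolding g_def by simp
  have "0 \<le> g a"
    using False \<open>f a = f b\<close> by (simp add: g_def)
  have pos: "0 < g s" if "a < s" "s \<le> b" for s
    using deriv_g crossing_g \<open>0 \<le> g a\<close> that by (rule pos_if_upward_zero_crossings)
  from pos[of "a + b - t"] False \<open>f a = f b\<close> t show ?thesis
    unfolding g_def by (cases "t = b") auto
qed

lemma pos_if_continuous_nonzero_connected:
  fixes f :: "'a::topological_space \<Rightarrow> real"
  assumes "continuous_on S f" "connected S" "\<And>t. t \<in> S \<Longrightarrow> f t \<noteq> 0"
    and "s \<in> S" "0 < f s" "t \<in> S"
  shows "0 < f t"
proof (rule ccontr)
  assume "\<not> 0 < f t"
  have "connected (f ` S)"
    using connected_continuous_image assms(1,2) .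
  then have "{f t..f s} \<subseteq> f ` S"
    using connected_contains_Icc \<open>s \<in> S\<close> \<open>t \<in> S\<close> by blast
  then have "0 \<in> f ` S"
    using \<open>\<not> 0 < f t\<close> \<open>0 < f s\<close> by auto
  with assms(3) show False
    by force
qed

lemma finite_card_le_Suc_card_if_separated:
  fixes S Z :: "real set"
  assumes "finite Z"
    and separated: "\<And>s s'. s \<in> S \<Longrightarrow> s' \<in> S \<Longrightarrow> s < s' \<Longrightarrow> \<exists>z\<in>Z. s < z \<and> z < s'"
  shows "finite S \<and> card S \<le> Suc (card Z)"
proof -
  define rank where "rank s = card {z \<in> Z. z < s}" for s
  have rank_less: "rank s < rank s'" if "s \<in> S" "s' \<in> S" "s < s'" for s s'
  proof -
    from separated[OF that] obtain z where "z \<in> Z" "s < z" "z < s'"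
      by blast
    have "{z \<in> Z. z < s} \<subseteq> {z \<in> Z. z < s'}"
      using \<open>s < s'\<close> by auto
    with \<open>z \<in> Z\<close> \<open>s < z\<close> \<open>z < s'\<close> have "{z \<in> Z. z < s} \<subset> {z \<in> Z. z < s'}"
      by (metis (no_types, lifting) mem_Collect_eq order_less_asym psubsetI)
    then show ?thesis
      unfolding rank_def using \<open>finite Z\<close> by (simp add: psubset_card_mono)
  qed
  have inj: "inj_on rank S"
    using rank_less by (intro linorder_inj_onI') (simp add: less_imp_neq)
  have "rank s \<le> card Z" for s
    unfolding rank_def using \<open>finite Z\<close> by (simp add: card_mono)
  then have img: "rank ` S \<subseteq> {..card Z}"
    by auto
  have "finite S"
    using finite_imageD[OF finite_subset[OF img finite_atMost] inj] .
  moreover have "card S \<le> Suc (card Z)"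
    using card_mono[OF finite_atMost img] card_image[OF inj] by simp
  ultimately show ?thesis ..
qed

lemma mult_quadratic_pos_if_discriminant_neg:
  fixes p q r y :: real
  assumes "q^2 + p * r < 0"
  shows "0 < p * (p * y^2 + 2 * q * y - r)"
proof -
  have "p * (p * y^2 + 2 * q * y - r) = (p * y + q)^2 - (q^2 + p * r)"
    by (simp add: algebra_simps power2_eq_square)
  moreover have "0 \<le> (p * y + q)^2"
    by simp
  ultimately show ?thesis
    using assms by linarith
qed

section \<open>Solutions of the Abel equation\<close>

lemma continuous_on_if_smooth_on_unit:
  assumes "smooth_on_unit f"
  shows "continuous_on {0..1} f"
proof -
  obtain D :: "nat \<Rightarrow> real \<Rightarrow> real" where "D 0 = f"
    and deriv: "\<forall>n. \<forall>t\<in>{0..1}. (D n has_real_derivative D (Suc n) t) (at t within {0..1})"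
    using assms unfolding smooth_on_unit_def by blast
  have "continuous_on {0..1} (D 0)"
    using deriv by (intro DERIV_continuous_on) blast
  with \<open>D 0 = f\<close> show ?thesis
    by simp
qed

lemma abel_solution_has_real_derivative:
  assumes "abel_solution A B C x" "t \<in> {0..1}"
  shows "(x has_real_derivative A t * (x t)^3 + B t * (x t)^2 + C t * x t) (at t within {0..1})"
  using assms unfolding abel_solution_def by blast

lemma abel_solution_continuous_on:
  assumes "abel_solution A B C x"
  shows "continuous_on {0..1} x"
  by (rule DERIV_continuous_on[OF abel_solution_has_real_derivative[OF assms]])

locale abel_equation =
  fixes A B C :: "real \<Rightarrow> real"
  assumes continuous_A: "continuous_on {0..1} A"
    and continuous_B: "continuous_on {0..1} B"
    and continuous_C: "continuous_on {0..1} C"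
begin

lemma abel_solution_unique:
  assumes u: "abel_solution A B C u" and v: "abel_solution A B C v"
    and t0: "t0 \<in> {0..1}" "u t0 = v t0" and t: "t \<in> {0..1}"
  shows "u t = v t"
proof -
  define K where "K s = A s * ((u s)^2 + u s * v s + (v s)^2) + B s * (u s + v s) + C s" for s
  have "continuous_on {0..1} K"
    unfolding K_def using continuous_A continuous_B continuous_C
      abel_solution_continuous_on[OF u] abel_solution_continuous_on[OF v]
    by (intro continuous_intros)
  then obtain L where L: "\<And>s. s \<in> {0..1} \<Longrightarrow> norm (K s) \<le> L"
    using continuous_on_compact_bound[OF compact_Icc] by metis
  have deriv: "((\<lambda>s. (u s - v s)^2) has_real_derivative 2 * K s * (u s - v s)^2) (at s within {0..1})"
    if "s \<in> {0..1}" for s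
  proof -
    have "((\<lambda>s. (u s - v s)^2) has_real_derivative
        2 * (u s - v s) * ((A s * (u s)^3 + B s * (u s)^2 + C s * u s)
          - (A s * (v s)^3 + B s * (v s)^2 + C s * v s))) (at s within {0..1})"
      using abel_solution_has_real_derivative[OF u that] abel_solution_has_real_derivative[OF v that]
      by (auto intro!: derivative_eq_intros)
    then show ?thesis
      unfolding K_def by (simp add: power2_eq_square power3_eq_cube algebra_simps)
  qed
  have bound: "\<bar>2 * K s * (u s - v s)^2\<bar> \<le> 2 * L * (u s - v s)^2" if "s \<in> {0..1}" for s
    using L[OF that] by (simp add: abs_mult mult_right_mono)
  have "(u t0 - v t0)^2 = 0"
    using t0(2) by simp
  with vanishing_if_abs_deriv_le_mult[OF deriv bound _ t0(1)] t have "(u t - v t)^2 = 0"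
    by simp
  then show ?thesis
    by simp
qed

lemma nonzero_periodic_orbit_nonzero:
  assumes "x \<in> nonzero_periodic_orbits A B C" "t \<in> {0..1}"
  shows "x t \<noteq> 0"
proof
  assume "x t = 0"
  have "abel_solution A B C (\<lambda>_. 0)"
    unfolding abel_solution_def by simp
  with assms \<open>x t = 0\<close> have "\<forall>s\<in>{0..1}. x s = 0"
    unfolding nonzero_periodic_orbits_def using abel_solution_unique[of x "\<lambda>_. 0" t] by auto
  with assms(1) show False
    unfolding nonzero_periodic_orbits_def by blast
qed

lemma nonzero_periodic_orbits_eqI:
  assumes "x \<in> nonzero_periodic_orbits A B C" "y \<in> nonzero_periodic_orbits A B C" "x 0 = y 0"
  shows "x = y"
proof
  fix t
  show "x t = y t"
    using assms abel_solution_unique[of x y 0 t]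
    unfolding nonzero_periodic_orbits_def by (cases "t \<in> {0..1}") auto
qed

lemma nonzero_periodic_orbits_less:
  assumes "x \<in> nonzero_periodic_orbits A B C" "y \<in> nonzero_periodic_orbits A B C"
    and "x 0 < y 0" "t \<in> {0..1}"
  shows "x t < y t"
proof -
  have "continuous_on {0..1} (\<lambda>s. y s - x s)"
    using assms(1,2) unfolding nonzero_periodic_orbits_def
    by (intro continuous_intros abel_solution_continuous_on) auto
  moreover have "y s - x s \<noteq> 0" if "s \<in> {0..1}" for s
    using assms abel_solution_unique[of x y s 0] that
    unfolding nonzero_periodic_orbits_def by auto
  ultimately show ?thesis
    using pos_if_continuous_nonzero_connected[of "{0..1}" "\<lambda>s. y s - x s" 0 t] assms(3,4)
    by auto
qed

end

section \<open>Periodic orbits under the definiteness condition\<close>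

locale abel_definite = abel_equation +
  fixes a b c \<sigma> :: real
  assumes definite: "\<And>t y. t \<in> {0..1} \<Longrightarrow>
    0 < \<sigma> * ((a * A t + b * B t) * y^2 + 2 * (b * C t - c * A t) * y - (c * B t + a * C t))"
begin

definition Q :: "real \<Rightarrow> real \<Rightarrow> real" where
  "Q t y = (a * A t + b * B t) * y^2 + 2 * (b * C t - c * A t) * y - (c * B t + a * C t)"

definition G :: "real \<Rightarrow> real" where
  "G y = b * y^2 - a * y + c"

definition R :: "real \<Rightarrow> real \<Rightarrow> real" where
  "R t y = (A t * y^2 + B t * y + C t) / G y"

definition barrier_levels :: "real set" where
  "barrier_levels = {y. y = 0 \<or> G y = 0}"

lemma sigma_Q_pos: "t \<in> {0..1} \<Longrightarrow> 0 < \<sigma> * Q t y"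
  unfolding Q_def by (rule definite)

lemma Q_eq_at_root_of_G: "G \<rho> = 0 \<Longrightarrow> (A t * \<rho>^2 + B t * \<rho> + C t) * (2 * b * \<rho> - a) = Q t \<rho>"
proof -
  assume "G \<rho> = 0"
  have "(A t * \<rho>^2 + B t * \<rho> + C t) * (2 * b * \<rho> - a) = Q t \<rho> + (2 * A t * \<rho> + B t) * G \<rho>"
    unfolding Q_def G_def by (simp add: algebra_simps power2_eq_square power3_eq_cube)
  with \<open>G \<rho> = 0\<close> show ?thesis
    by simp
qed

lemma R_has_real_derivative:
  assumes "G y \<noteq> 0"
  shows "(R t has_real_derivative - Q t y / (G y)^2) (at y)"
proof -
  have "(R t has_real_derivative
      ((2 * A t * y + B t) * G y - (A t * y^2 + B t * y + C t) * (2 * b * y - a)) / (G y * G y)) (at y)"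
    unfolding R_def G_def using assms[unfolded G_def]
    by (auto intro!: derivative_eq_intros simp: algebra_simps)
  moreover have "(2 * A t * y + B t) * G y - (A t * y^2 + B t * y + C t) * (2 * b * y - a) = - Q t y"
    unfolding Q_def G_def by (simp add: algebra_simps power2_eq_square)
  ultimately show ?thesis
    by (simp add: power2_eq_square)
qed

lemma sigma_R_diff_neg:
  assumes "t \<in> {0..1}" "y < y'" and nonzero: "\<And>\<eta>. \<eta> \<in> {y..y'} \<Longrightarrow> G \<eta> \<noteq> 0"
  shows "\<sigma> * (R t y' - R t y) < 0"
proof -
  obtain \<eta> where "\<eta> \<in> {y<..<y'}" and \<eta>: "R t y' - R t y = - Q t \<eta> / (G \<eta>)^2 * (y' - y)"
    using mvt_real_derivative_within[OF \<open>y < y'\<close> subset_UNIV, of "R t" "\<lambda>\<eta>. - Q t \<eta> / (G \<eta>)^2"]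
      R_has_real_derivative nonzero by auto
  then have "0 < (G \<eta>)^2"
    using nonzero by simp
  with sigma_Q_pos[OF \<open>t \<in> {0..1}\<close>, of \<eta>] \<open>y < y'\<close> have "0 < \<sigma> * Q t \<eta> / (G \<eta>)^2 * (y' - y)"
    by simp
  moreover have "\<sigma> * (R t y' - R t y) = - (\<sigma> * Q t \<eta> / (G \<eta>)^2 * (y' - y))"
    using \<eta> by simp
  ultimately show ?thesis
    by linarith
qed

lemma periodic_solution_avoids_root_of_G:
  assumes x: "abel_solution A B C x" "x 0 = x 1"
    and "G \<rho> = 0" "\<rho> \<noteq> 0" "t \<in> {0..1}"
  shows "x t \<noteq> \<rho>"
proof -
  have transversal: "0 < \<sigma> * (A s * \<rho>^2 + B s * \<rho> + C s) * (2 * b * \<rho> - a)" if "s \<in> {0..1}" for s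
    using sigma_Q_pos[OF that, of \<rho>] Q_eq_at_root_of_G[OF \<open>G \<rho> = 0\<close>, of s] by (simp add: mult.assoc)
  define k where "k = \<sigma> * (2 * b * \<rho> - a) * \<rho>"
  have "k \<noteq> 0"
    using transversal[OF \<open>t \<in> {0..1}\<close>] \<open>\<rho> \<noteq> 0\<close> unfolding k_def by auto
  define f' where "f' s = k * (A s * (x s)^3 + B s * (x s)^2 + C s * x s)" for s
  have deriv: "((\<lambda>s. k * (x s - \<rho>)) has_real_derivative f' s) (at s within {0..1})"
    if "s \<in> {0..1}" for s
    unfolding f'_def using abel_solution_has_real_derivative[OF x(1) that]
    by (auto intro!: derivative_eq_intros)
  have "0 < f' s" if "s \<in> {0..1}" "k * (x s - \<rho>) = 0" for s
  proof -
    have "x s = \<rho>"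
      using that(2) \<open>k \<noteq> 0\<close> by simp
    then have "f' s = \<rho>^2 * (\<sigma> * (A s * \<rho>^2 + B s * \<rho> + C s) * (2 * b * \<rho> - a))"
      unfolding f'_def k_def by (simp add: algebra_simps power2_eq_square power3_eq_cube)
    with transversal[OF that(1)] \<open>\<rho> \<noteq> 0\<close> show ?thesis
      by simp
  qed
  with deriv have "k * (x t - \<rho>) \<noteq> 0"
    by (rule nonzero_if_upward_zero_crossings_periodic) (use x(2) \<open>t \<in> {0..1}\<close> in auto)
  then show ?thesis
    by auto
qed

lemma nonzero_periodic_orbit_avoids_barrier_levels:
  assumes "x \<in> nonzero_periodic_orbits A B C" "t \<in> {0..1}"
  shows "x t \<notin> barrier_levels"
proof
  assume "x t \<in> barrier_levels"
  moreover have "x t \<noteq> 0"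
    using nonzero_periodic_orbit_nonzero[OF assms] .
  moreover have "abel_solution A B C x" "x 0 = x 1"
    using assms(1) unfolding nonzero_periodic_orbits_def by auto
  ultimately show False
    using periodic_solution_avoids_root_of_G[of x "x t" t] assms(2)
    unfolding barrier_levels_def by auto
qed

lemma nonzero_periodic_orbit_less_iff:
  assumes "x \<in> nonzero_periodic_orbits A B C" "z \<in> barrier_levels" "t \<in> {0..1}"
  shows "z < x t \<longleftrightarrow> z < x 0"
proof -
  have "continuous_on {0..1} x"
    using assms(1) abel_solution_continuous_on unfolding nonzero_periodic_orbits_def by blast
  then have cont: "continuous_on {0..1} (\<lambda>s. x s - z)" "continuous_on {0..1} (\<lambda>s. z - x s)"
    by (auto intro!: continuous_intros)
  have avoid: "x s \<noteq> z" if "s \<in> {0..1}" for s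
    using nonzero_periodic_orbit_avoids_barrier_levels[OF assms(1) that] assms(2) by auto
  then consider "z < x 0" | "x 0 < z"
    by (meson atLeastAtMost_iff linorder_neqE_linordered_idom zero_le_one order_refl)
  then show ?thesis
  proof cases
    case 1
    then have "0 < x t - z"
      using pos_if_continuous_nonzero_connected[OF cont(1) connected_Icc, of 0 t] avoid assms(3)
      by auto
    with 1 show ?thesis
      by simp
  next
    case 2
    then have "0 < z - x t"
      using pos_if_continuous_nonzero_connected[OF cont(2) connected_Icc, of 0 t] avoid assms(3)
      by auto
    with 2 show ?thesis
      by simp
  qed
qed

lemma no_ordered_periodic_solutions_in_strip:
  assumes u: "abel_solution A B C u" "u 0 = u 1" and v: "abel_solution A B C v" "v 0 = v 1"
    and below: "\<And>t. t \<in> {0..1} \<Longrightarrow> u t < v t"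
    and strip: "\<And>t. t \<in> {0..1} \<Longrightarrow> m \<le> u t \<and> v t \<le> M"
    and avoid: "{m..M} \<inter> barrier_levels = {}"
  shows False
proof -
  have nonzero: "y \<noteq> 0" "G y \<noteq> 0" if "y \<in> {m..M}" for y
    using avoid that unfolding barrier_levels_def by auto
  define \<psi> where "\<psi> x = integral {m..x} (\<lambda>y. 1 / (y * G y))" for x
  have "continuous_on {m..M} (\<lambda>y. 1 / (y * G y))"
    unfolding G_def using nonzero[unfolded G_def] by (intro continuous_intros) auto
  then have deriv_\<psi>: "(\<psi> has_real_derivative 1 / (y * G y)) (at y within {m..M})"
    if "y \<in> {m..M}" for y
    unfolding \<psi>_def using that by (rule integral_has_real_derivative)
  have deriv_\<psi>_sol: "((\<lambda>t. \<psi> (x t)) has_real_derivative R t (x t)) (at t within {0..1})"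
    if x: "abel_solution A B C x" "\<And>t. t \<in> {0..1} \<Longrightarrow> x t \<in> {m..M}" and "t \<in> {0..1}" for x t
  proof -
    have "x ` {0..1} \<subseteq> {m..M}"
      using x(2) by blast
    with deriv_\<psi>[OF x(2)[OF \<open>t \<in> {0..1}\<close>]]
    have "(\<psi> has_real_derivative 1 / (x t * G (x t))) (at (x t) within x ` {0..1})"
      by (rule has_field_derivative_subset)
    from DERIV_image_chain[OF this abel_solution_has_real_derivative[OF x(1) \<open>t \<in> {0..1}\<close>]]
    have "(\<psi> \<circ> x has_real_derivative
        1 / (x t * G (x t)) * (A t * (x t)^3 + B t * (x t)^2 + C t * x t)) (at t within {0..1})" .
    moreover have "1 / (x t * G (x t)) * (A t * (x t)^3 + B t * (x t)^2 + C t * x t) = R t (x t)"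
      using nonzero[OF x(2)[OF \<open>t \<in> {0..1}\<close>]] unfolding R_def
      by (simp add: field_simps power2_eq_square power3_eq_cube)
    ultimately show ?thesis
      by (simp add: o_def)
  qed
  have "u t \<in> {m..M}" "v t \<in> {m..M}" if "t \<in> {0..1}" for t
    using strip[OF that] below[OF that] by auto
  then have "((\<lambda>t. \<psi> (v t) - \<psi> (u t)) has_real_derivative R t (v t) - R t (u t)) (at t within {0..1})"
    if "t \<in> {0..1}" for t
    using deriv_\<psi>_sol[OF u(1) _ that] deriv_\<psi>_sol[OF v(1) _ that] by (intro DERIV_diff) auto
  from mvt_real_derivative_within[OF zero_less_one order_refl this]
  obtain \<xi> where "\<xi> \<in> {0<..<1}"
    and "\<psi> (v 1) - \<psi> (u 1) - (\<psi> (v 0) - \<psi> (u 0)) = (R \<xi> (v \<xi>) - R \<xi> (u \<xi>)) * (1 - 0)"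
    by blast
  with u(2) v(2) have "R \<xi> (v \<xi>) - R \<xi> (u \<xi>) = 0"
    by simp
  moreover have "\<sigma> * (R \<xi> (v \<xi>) - R \<xi> (u \<xi>)) < 0"
  proof (rule sigma_R_diff_neg)
    show "\<xi> \<in> {0..1}" "u \<xi> < v \<xi>"
      using \<open>\<xi> \<in> {0<..<1}\<close> below by auto
    show "G \<eta> \<noteq> 0" if "\<eta> \<in> {u \<xi>..v \<xi>}" for \<eta>
      using nonzero(2) strip[of \<xi>] \<open>\<xi> \<in> {0<..<1}\<close> that by auto
  qed
  ultimately show False
    by simp
qed

lemma nonzero_periodic_orbits_separated:
  assumes u: "u \<in> nonzero_periodic_orbits A B C" and v: "v \<in> nonzero_periodic_orbits A B C"
    and "u 0 < v 0"
  shows "\<exists>z\<in>barrier_levels. u 0 < z \<and> z < v 0"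
proof (rule ccontr)
  assume no_level: "\<not> ?thesis"
  have sol: "abel_solution A B C u" "u 0 = u 1" "abel_solution A B C v" "v 0 = v 1"
    using u v unfolding nonzero_periodic_orbits_def by auto
  obtain tm where "tm \<in> {0..1}" and min: "\<And>t. t \<in> {0..1} \<Longrightarrow> u tm \<le> u t"
    using continuous_attains_inf[OF compact_Icc _ abel_solution_continuous_on[OF sol(1)]] by auto
  obtain tM where "tM \<in> {0..1}" and max: "\<And>t. t \<in> {0..1} \<Longrightarrow> v t \<le> v tM"
    using continuous_attains_sup[OF compact_Icc _ abel_solution_continuous_on[OF sol(3)]] by auto
  have "z \<notin> {u tm..v tM}" if "z \<in> barrier_levels" for z
  proof -
    have "z \<noteq> u 0" "z \<noteq> v 0"
      using nonzero_periodic_orbit_avoids_barrier_levels[OF u, of 0]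
        nonzero_periodic_orbit_avoids_barrier_levels[OF v, of 0] that by auto
    with no_level that consider "z < u 0" | "v 0 < z"
      by fastforce
    then show ?thesis
    proof cases
      case 1
      with nonzero_periodic_orbit_less_iff[OF u that \<open>tm \<in> {0..1}\<close>] show ?thesis
        by simp
    next
      case 2
      with nonzero_periodic_orbit_less_iff[OF v that \<open>tM \<in> {0..1}\<close>] have "v tM \<le> z"
        by simp
      moreover have "v tM \<noteq> z"
        using nonzero_periodic_orbit_avoids_barrier_levels[OF v \<open>tM \<in> {0..1}\<close>] that by auto
      ultimately show ?thesis
        by simp
    qed
  qed
  then have "{u tm..v tM} \<inter> barrier_levels = {}"
    by blast
  moreover have "u t < v t" if "t \<in> {0..1}" for t
    using nonzero_periodic_orbits_less[OF u v \<open>u 0 < v 0\<close> that] .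
  ultimately show False
    using no_ordered_periodic_solutions_in_strip[OF sol] min max by blast
qed

lemma finite_card_barrier_levels: "finite barrier_levels \<and> card barrier_levels \<le> 3"
proof -
  define p where "p = [:c, - a, b:]"
  have "p \<noteq> 0"
  proof
    assume "p = 0"
    then have "a = 0" "b = 0" "c = 0"
      unfolding p_def by auto
    with sigma_Q_pos[of 0 0] show False
      unfolding Q_def by simp
  qed
  have "barrier_levels = insert 0 {y. poly p y = 0}"
    unfolding barrier_levels_def G_def p_def by (auto simp: algebra_simps power2_eq_square)
  moreover have "degree p \<le> 2"
    unfolding p_def by (simp add: degree_pCons_eq_if)
  then have "card {y. poly p y = 0} \<le> 2"
    using card_poly_roots_bound[OF \<open>p \<noteq> 0\<close>] by linarith
  ultimately show ?thesis
    using poly_roots_finite[OF \<open>p \<noteq> 0\<close>] by (simp add: card_insert_if)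
qed

theorem finite_card_nonzero_periodic_orbits:
  "finite (nonzero_periodic_orbits A B C) \<and> card (nonzero_periodic_orbits A B C) \<le> 4"
proof -
  let ?P = "nonzero_periodic_orbits A B C"
  have inj: "inj_on (\<lambda>x. x 0) ?P"
    using nonzero_periodic_orbits_eqI by (intro inj_onI)
  have "finite ((\<lambda>x. x 0) ` ?P) \<and> card ((\<lambda>x. x 0) ` ?P) \<le> Suc (card barrier_levels)"
    using finite_card_barrier_levels nonzero_periodic_orbits_separated
    by (intro finite_card_le_Suc_card_if_separated) auto
  with finite_card_barrier_levels inj show ?thesis
    by (simp add: card_image finite_image_iff)
qed

end

theorem theorem5p2:
  fixes A B C :: "real \<Rightarrow> real" and a b c :: real
  assumes "smooth_on_unit A" and "smooth_on_unit B" and "smooth_on_unit C"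
    and "\<exists>t\<in>{0..1}. a * A t + b * B t \<noteq> 0"
    and "(\<forall>t\<in>{0..1}. a * A t + b * B t \<ge> 0) \<or> (\<forall>t\<in>{0..1}. a * A t + b * B t \<le> 0)"
    and "\<forall>t\<in>{0..1}. (b * C t - c * A t)^2 + (a * A t + b * B t) * (c * B t + a * C t) < 0"
  shows "finite (nonzero_periodic_orbits A B C) \<and> card (nonzero_periodic_orbits A B C) \<le> 4"
proof -
  define \<alpha> where "\<alpha> t = a * A t + b * B t" for t
  define Q where "Q t y = \<alpha> t * y^2 + 2 * (b * C t - c * A t) * y - (c * B t + a * C t)" for t y
  have \<alpha>Q: "0 < \<alpha> t * Q t y" if "t \<in> {0..1}" for t y
    unfolding \<alpha>_def Q_def using assms(6) that by (intro mult_quadratic_pos_if_discriminant_neg) auto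
  text \<open>Hence aA + bB vanishes nowhere.\<close>
  obtain \<sigma> :: real where "\<sigma> \<noteq> 0" and "\<And>t. t \<in> {0..1} \<Longrightarrow> 0 \<le> \<sigma> * \<alpha> t"
    using assms(5) unfolding \<alpha>_def by (metis mult_1 mult_minus1 neg_0_le_iff_le one_neq_zero neg_equal_0_iff_equal)
  with \<alpha>Q have "0 < \<sigma> * Q t y" if "t \<in> {0..1}" for t y
    using that by (fastforce simp: zero_less_mult_iff zero_le_mult_iff)
  then interpret abel_definite A B C a b c \<sigma>
    using assms(1-3) continuous_on_if_smooth_on_unit unfolding \<alpha>_def Q_def
    by unfold_locales auto
  show ?thesis
    by (rule finite_card_nonzero_periodic_orbits)
qed

end
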